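(* Suppose the information $\sigma$-algebra $\mathcal{F}_I$ contains no fading information, i.e. $\mathcal{F}_I\subseteq\sigma(\phi_1,\dots,\phi_T)$ (so that, conditionally on $\sigma(\mathcal{F}_I\cup\phi_i)$, the fading variables $(H^i_k)_k$ are i.i.d. with their original law). Then for each technology $i$, $$j_i:=\arg\sup_{j\ge1}\mathbb{E}\big[p_i(\mathrm{SINR}^{i,j}_0)\,\big|\,\mathcal{F}_I\big]=1,$$ so the optimal policy associates with the nearest base station of the chosen technology: $\pi^*_I(1)=j_{\pi^*_I(0)}=1$.
   Context: Network model: $T\ge1$ technologies; $\phi_i$ are independent homogeneous Poisson point processes on $\mathbb{R}^2$ of intensities $\lambda_i>0$; $r^i_j$ is the distance from the origin to the $j$-th nearest point of $\phi_i$. Base stations of technology $i$ transmit at power $P_i>0$; fading coefficients $H^i_j\ge0$ are i.i.d. over all $(i,j)$, independent of the point processes; $l_i$ is a non-increasing path-loss function (strictly decreasing $S_k=P_il_i(r^i_k)$ in $k$ is used), $N^i_0\ge0$; $\mathrm{SINR}^{i,j}_0=\dfrac{P_iH^i_jl_i(r^i_j)}{N^i_0+\sum_{k\ne j}P_iH^i_kl_i(r^i_k)}$. Each $p_i$ is non-decreasing. The optimal policy $\pi^*_I=(\pi^*_I(0),\pi^*_I(1))$ chooses the technology and base-station index maximizing $\mathbb{E}[p_i(\mathrm{SINR}^{i,j}_0)\mid\mathcal{F}_I]$ over $(i,j)$. *)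

theory Defs
  imports "HOL-Probability.Probability"
begin

(* A point process in the plane is represented by an enumeration X 1, X 2, ... of its points
   (index 0 is unused).  Its counting measure: *)
definition ppp_count :: "(nat \<Rightarrow> 'a \<Rightarrow> real^2) \<Rightarrow> (real^2) set \<Rightarrow> 'a \<Rightarrow> ennreal" where
  "ppp_count X A \<omega> = (\<Sum>k. indicator A (X (Suc k) \<omega>))"

definition hom_PPP :: "'a measure \<Rightarrow> real \<Rightarrow> (nat \<Rightarrow> 'a \<Rightarrow> real^2) \<Rightarrow> bool" where
  "hom_PPP M lam X \<longleftrightarrow> lam > 0 \<and> (\<forall>k\<ge>1. X k \<in> borel_measurable M) \<and>
     (\<forall>A\<in>sets borel. bounded A \<longrightarrow> (\<forall>n::nat.
        measure M {\<omega>\<in>space M. ppp_count X A \<omega> = of_nat n}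
          = (lam * measure lborel A) ^ n / fact n * exp (- (lam * measure lborel A)))) \<and>
     (\<forall>I (B :: nat \<Rightarrow> (real^2) set). finite I \<longrightarrow> (\<forall>t\<in>I. B t \<in> sets borel \<and> bounded (B t)) \<longrightarrow>
        disjoint_family_on B I \<longrightarrow>
        prob_space.indep_vars M (\<lambda>_. count_space UNIV) (\<lambda>t. ppp_count X (B t)) I)"

definition point_sigma :: "'a measure \<Rightarrow> nat \<Rightarrow> (nat \<Rightarrow> nat \<Rightarrow> 'a \<Rightarrow> real^2) \<Rightarrow> 'a measure" where
  "point_sigma M T X = sigma (space M)
     (\<Union>i\<in>{..<T}. \<Union>k\<in>{1..}. {X i k -` A \<inter> space M | A. A \<in> sets borel})"

definition fading_sigma :: "'a measure \<Rightarrow> nat \<Rightarrow> (nat \<Rightarrow> nat \<Rightarrow> 'a \<Rightarrow> real) \<Rightarrow> 'a measure" where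
  "fading_sigma M T H = sigma (space M)
     (\<Union>i\<in>{..<T}. \<Union>k\<in>{1..}. {H i k -` A \<inter> space M | A. A \<in> sets borel})"

definition sinr :: "(nat \<Rightarrow> real) \<Rightarrow> (nat \<Rightarrow> real) \<Rightarrow> (nat \<Rightarrow> real \<Rightarrow> real) \<Rightarrow>
    (nat \<Rightarrow> nat \<Rightarrow> 'a \<Rightarrow> real) \<Rightarrow> (nat \<Rightarrow> nat \<Rightarrow> 'a \<Rightarrow> real^2) \<Rightarrow> nat \<Rightarrow> nat \<Rightarrow> 'a \<Rightarrow> ennreal" where
  "sinr P N0 l H X i j \<omega> =
     ennreal (P i * H i j \<omega> * l i (norm (X i j \<omega>))) /
     (ennreal (N0 i) + (\<Sum>k. if Suc k = j then 0
                              else ennreal (P i * H i (Suc k) \<omega> * l i (norm (X i (Suc k) \<omega>)))))"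

end

theory Submission
  imports Defs
begin

(* Exchanging the fading coefficients H_1 and H_j leaves the
   joint law of (all points, fading of technology i) unchanged, because the fading is i.i.d. and
   independent of the points.  After the exchange the useful signal of station j is
   H_1 l(r_j) <= H_1 l(r_1), while station 1 interferes with H_j l(r_1) >= H_j l(r_j), so the SINR
   of station j becomes pointwise at most the SINR of station 1.  Every event of F_I is an event
   about the points alone, so integrating p_i(SINR_j) over it is unaffected by the exchange, and
   comparing these set integrals compares the conditional expectations. *)

lemma borel_measurable_mono_complete_linorder:
  fixes f :: "'a::{complete_linorder, linorder_topology} \<Rightarrow> real"
  assumes "mono f"
  shows "f \<in> borel_measurable borel"
proof (subst borel_measurable_iff_le, intro allI)
  fix c
  define D where "D = {x. f x \<le> c}"
  define s where "s = Sup D"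
  have down: "x \<in> D" if "y \<in> D" "x \<le> y" for x y
    using that assms by (auto simp: D_def mono_def intro: order_trans)
  have "D = {..<s} \<union> (if s \<in> D then {s} else {})"
  proof (intro equalityI subsetI)
    fix x assume "x \<in> D"
    then have "x \<le> s" unfolding s_def by (rule Sup_upper)
    then show "x \<in> {..<s} \<union> (if s \<in> D then {s} else {})"
      using \<open>x \<in> D\<close> by (cases "x = s") auto
  next
    fix x assume x: "x \<in> {..<s} \<union> (if s \<in> D then {s} else {})"
    show "x \<in> D"
    proof (cases "x < s")
      case True
      then obtain y where "y \<in> D" "x < y" unfolding s_def using less_Sup_iff by blast
      then show ?thesis using down by auto
    next
      case False
      then show ?thesis using x by (auto split: if_splits)
    qed
  qed
  then show "{w \<in> space borel. f w \<le> c} \<in> sets borel" by (simp add: D_def)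
qed

lemma borel_measurable_antimono:
  fixes f :: "real \<Rightarrow> real"
  assumes "antimono f"
  shows "f \<in> borel_measurable borel"
proof -
  have "mono (\<lambda>x. - f x)" using assms by (auto simp: mono_def antimono_def)
  then have "(\<lambda>x. - (- f x)) \<in> borel_measurable borel"
    by (intro borel_measurable_uminus borel_measurable_mono)
  then show ?thesis by simp
qed

lemma divide_mono_ennreal:
  fixes a b c d :: ennreal
  assumes "a \<le> b" "d \<le> c"
  shows "a / c \<le> b / d"
proof -
  have "inverse c \<le> inverse d" using assms(2)
    unfolding less_eq_ennreal.rep_eq inverse_ennreal.rep_eq
    by (rule ereal_inverse_antimono[rotated]) simp
  then show ?thesis unfolding divide_ennreal_def by (intro mult_mono assms) auto
qed

lemma suminf_ennreal_pick:
  fixes f :: "nat \<Rightarrow> ennreal"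
  shows "(\<Sum>k. f k) = f b + (\<Sum>k. if k = b then 0 else f k)"
proof -
  have "(\<Sum>k. f k) = (\<Sum>k. (if k = b then f b else 0) + (if k = b then 0 else f k))"
    by (rule arg_cong[of _ _ suminf]) auto
  also have "\<dots> = (\<Sum>k. if k = b then f b else 0) + (\<Sum>k. if k = b then 0 else f k)"
    by (rule suminf_add[symmetric]) simp_all
  also have "(\<Sum>k. if k = b then f b else 0) = f b"
    by (rule sums_single[THEN sums_unique, symmetric])
  finally show ?thesis .
qed

lemma real_cond_exp_le_if_set_integral_le:
  fixes f g :: "'a \<Rightarrow> real"
  assumes "prob_space M" and sub: "subalgebra M F"
    and f: "integrable M f" and g: "integrable M g"
    and le: "\<And>A. A \<in> sets F \<Longrightarrow> (\<integral>x\<in>A. f x \<partial>M) \<le> (\<integral>x\<in>A. g x \<partial>M)"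
  shows "AE x in M. real_cond_exp M F f x \<le> real_cond_exp M F g x"
proof -
  interpret prob_space M by fact
  interpret finite_measure_subalgebra M F by unfold_locales (fact sub)
  define h where "h x = real_cond_exp M F g x - real_cond_exp M F f x" for x
  have [measurable]: "h \<in> borel_measurable F" unfolding h_def by measurable
  have "integrable M h" unfolding h_def using f g by auto
  then have h_int: "integrable (restr_to_subalg M F) h"
    by (simp add: integrable_in_subalg[OF sub])
  have restr_sigma_finite: "sigma_finite_measure (restr_to_subalg M F)"
    using prob_space_restr_to_subalg[OF sub \<open>prob_space M\<close>] by (rule prob_space_imp_sigma_finite)
  have "0 \<le> (\<integral>x\<in>A. h x \<partial>restr_to_subalg M F)" if A: "A \<in> sets (restr_to_subalg M F)" for A
  proof -
    have AF [measurable]: "A \<in> sets F" using A sets_restr_to_subalg[OF sub] by simp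
    then have AM [measurable]: "A \<in> sets M" using sub by (auto simp: subalgebra_def)
    have "(\<integral>x\<in>A. h x \<partial>restr_to_subalg M F) = (\<integral>x\<in>A. h x \<partial>M)"
      unfolding set_lebesgue_integral_def by (simp add: integral_subalgebra2 sub)
    also have "\<dots> = (\<integral>x\<in>A. real_cond_exp M F g x \<partial>M) - (\<integral>x\<in>A. real_cond_exp M F f x \<partial>M)"
      unfolding h_def
      by (intro set_integral_diff(2);
          unfold set_integrable_def; intro integrable_mult_indicator AM real_cond_exp_int(1) f g)
    also have "\<dots> = (\<integral>x\<in>A. g x \<partial>M) - (\<integral>x\<in>A. f x \<partial>M)"
      using real_cond_exp_intA[OF f AF] real_cond_exp_intA[OF g AF] by simp
    finally show ?thesis using le[OF AF] by simp
  qed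
  then have "AE x in restr_to_subalg M F. 0 \<le> h x"
    by (rule sigma_finite_measure.density_nonneg[OF restr_sigma_finite h_int])
  then have "AE x in M. 0 \<le> h x" by (rule AE_restr_to_subalg[OF sub])
  then show ?thesis by eventually_elim (simp add: h_def)
qed

lemma indep_vars_reindex:
  assumes "prob_space M" and ind: "prob_space.indep_vars M N Y I"
    and inj: "inj_on h K" and sub: "h ` K \<subseteq> I"
  shows "prob_space.indep_vars M (\<lambda>k. N (h k)) (\<lambda>k. Y (h k)) K"
proof -
  interpret prob_space M by fact
  from ind have rv: "\<forall>i\<in>I. random_variable (N i) (Y i)"
    and ist: "indep_sets (\<lambda>i. {Y i -` A \<inter> space M |A. A \<in> sets (N i)}) I"
    unfolding indep_vars_def2 by auto
  show ?thesis unfolding indep_vars_def2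
  proof (intro conjI)
    show "\<forall>k\<in>K. random_variable (N (h k)) (Y (h k))" using rv sub by auto
    show "indep_sets (\<lambda>k. {Y (h k) -` A \<inter> space M |A. A \<in> sets (N (h k))}) K"
      unfolding indep_sets_def
    proof (intro conjI ballI allI impI)
      fix k assume "k \<in> K"
      then show "{Y (h k) -` A \<inter> space M |A. A \<in> sets (N (h k))} \<subseteq> events"
        using ist sub unfolding indep_sets_def by auto
    next
      fix L A assume L: "L \<subseteq> K" "L \<noteq> {}" "finite L"
        and A: "A \<in> (\<Pi> k\<in>L. {Y (h k) -` A \<inter> space M |A. A \<in> sets (N (h k))})"
      define A' where "A' m = A (the_inv_into L h m)" for m
      have injL: "inj_on h L" using inj L(1) by (rule inj_on_subset)
      have A'h: "A' (h k) = A k" if "k \<in> L" for k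
        unfolding A'_def using the_inv_into_f_f[OF injL that] by simp
      have "prob (\<Inter>m\<in>h ` L. A' m) = (\<Prod>m\<in>h ` L. prob (A' m))"
      proof (rule indep_setsD[OF ist])
        show "h ` L \<subseteq> I" "h ` L \<noteq> {}" "finite (h ` L)" using L sub by auto
        show "\<forall>m\<in>h ` L. A' m \<in> {Y m -` A \<inter> space M |A. A \<in> sets (N m)}"
          using A A'h by auto
      qed
      moreover have "(\<Inter>m\<in>h ` L. A' m) = (\<Inter>k\<in>L. A k)" using A'h by auto
      moreover have "(\<Prod>m\<in>h ` L. prob (A' m)) = (\<Prod>k\<in>L. prob (A k))"
        by (simp add: prod.reindex[OF injL] A'h)
      ultimately show "prob (\<Inter>k\<in>L. A k) = (\<Prod>k\<in>L. prob (A k))" by simp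
    qed
  qed
qed

lemma distr_reindex_iid:
  assumes "prob_space M" and ind: "prob_space.indep_vars M (\<lambda>_. N) Y I"
    and "K \<noteq> {}" and inj: "inj_on h K" and sub: "h ` K \<subseteq> I"
    and ident: "\<And>k. k \<in> K \<Longrightarrow> distr M N (Y (h k)) = D"
  shows "distr M (\<Pi>\<^sub>M k\<in>K. N) (\<lambda>\<omega>. \<lambda>k\<in>K. Y (h k) \<omega>) = (\<Pi>\<^sub>M k\<in>K. D)"
proof -
  interpret prob_space M by fact
  have ind_h: "indep_vars (\<lambda>_. N) (\<lambda>k. Y (h k)) K"
    using indep_vars_reindex[OF \<open>prob_space M\<close> ind inj sub] by simp
  then have "\<And>k. k \<in> K \<Longrightarrow> random_variable N (Y (h k))"
    unfolding indep_vars_def2 by auto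
  then have "distr M (\<Pi>\<^sub>M k\<in>K. N) (\<lambda>\<omega>. \<lambda>k\<in>K. Y (h k) \<omega>) = (\<Pi>\<^sub>M k\<in>K. distr M N (Y (h k)))"
    using indep_vars_iff_distr_eq_PiM'[where I=K and M'="\<lambda>_. N" and X="\<lambda>k. Y (h k)"] ind_h \<open>K \<noteq> {}\<close> by simp
  then show ?thesis by (simp add: ident cong: PiM_cong)
qed

lemma distr_pair_eq_pair_measure_if_indep_set:
  assumes "prob_space M" and ind: "prob_space.indep_set M (sets MA) (sets MB)"
    and "space MA = space M" "space MB = space M"
    and Z: "Z \<in> M \<rightarrow>\<^sub>M S" "Z \<in> MA \<rightarrow>\<^sub>M S" and V: "V \<in> M \<rightarrow>\<^sub>M R" "V \<in> MB \<rightarrow>\<^sub>M R"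
  shows "distr M (S \<Otimes>\<^sub>M R) (\<lambda>\<omega>. (Z \<omega>, V \<omega>)) = distr M S Z \<Otimes>\<^sub>M distr M R V"
proof (rule pair_measure_eqI[symmetric])
  interpret prob_space M by fact
  interpret PS: prob_space "distr M S Z" by (rule prob_space_distr[OF Z(1)])
  interpret PR: prob_space "distr M R V" by (rule prob_space_distr[OF V(1)])
  show "sigma_finite_measure (distr M S Z)" "sigma_finite_measure (distr M R V)"
    by unfold_locales
  have "sets (distr M S Z \<Otimes>\<^sub>M distr M R V) = sets (S \<Otimes>\<^sub>M R)"
    by (intro sets_pair_measure_cong) simp_all
  then show "sets (distr M S Z \<Otimes>\<^sub>M distr M R V) = sets (distr M (S \<Otimes>\<^sub>M R) (\<lambda>\<omega>. (Z \<omega>, V \<omega>)))"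
    by simp
  fix A B assume "A \<in> sets (distr M S Z)" "B \<in> sets (distr M R V)"
  then have A: "A \<in> sets S" and B: "B \<in> sets R" by auto
  have "(\<lambda>\<omega>. (Z \<omega>, V \<omega>)) -` (A \<times> B) \<inter> space M = (Z -` A \<inter> space M) \<inter> (V -` B \<inter> space M)"
    by auto
  moreover have "prob ((Z -` A \<inter> space M) \<inter> (V -` B \<inter> space M)) = prob (Z -` A \<inter> space M) * prob (V -` B \<inter> space M)"
    using measurable_sets[OF Z(2) A] measurable_sets[OF V(2) B] assms(3,4)
    by (intro indep_setD[OF ind]) auto
  ultimately show "emeasure (distr M S Z) A * emeasure (distr M R V) B
      = emeasure (distr M (S \<Otimes>\<^sub>M R) (\<lambda>\<omega>. (Z \<omega>, V \<omega>))) (A \<times> B)"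
    using A B Z(1) V(1)
    by (simp add: emeasure_distr emeasure_eq_measure ennreal_mult measurable_Pair)
qed

lemma real_cond_exp_le_by_exchange:
  fixes \<phi> \<psi> :: "'s \<times> 'r \<Rightarrow> real"
  assumes M: "prob_space M" and sub: "subalgebra M F"
    and Z: "Z \<in> M \<rightarrow>\<^sub>M S" and W: "W \<in> M \<rightarrow>\<^sub>M R"
    and F_Z: "\<And>A. A \<in> sets F \<Longrightarrow> \<exists>B\<in>sets S. A = Z -` B \<inter> space M"
    and exch: "distr M (S \<Otimes>\<^sub>M R) (\<lambda>\<omega>. (Z \<omega>, \<sigma> (W \<omega>))) = distr M (S \<Otimes>\<^sub>M R) (\<lambda>\<omega>. (Z \<omega>, W \<omega>))"
    and \<sigma>: "\<sigma> \<in> R \<rightarrow>\<^sub>M R"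
    and \<phi>: "\<phi> \<in> borel_measurable (S \<Otimes>\<^sub>M R)"
    and int_\<phi>: "integrable M (\<lambda>\<omega>. \<phi> (Z \<omega>, W \<omega>))" and int_\<psi>: "integrable M (\<lambda>\<omega>. \<psi> (Z \<omega>, W \<omega>))"
    and le: "\<And>\<omega>. \<omega> \<in> space M \<Longrightarrow> \<phi> (Z \<omega>, \<sigma> (W \<omega>)) \<le> \<psi> (Z \<omega>, W \<omega>)"
  shows "AE \<omega> in M. real_cond_exp M F (\<lambda>\<omega>. \<phi> (Z \<omega>, W \<omega>)) \<omega> \<le> real_cond_exp M F (\<lambda>\<omega>. \<psi> (Z \<omega>, W \<omega>)) \<omega>"
proof (rule real_cond_exp_le_if_set_integral_le[OF M sub int_\<phi> int_\<psi>])
  fix A assume "A \<in> sets F"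
  then obtain B where B: "B \<in> sets S" and A: "A = Z -` B \<inter> space M" using F_Z by blast
  define \<Phi> where "\<Phi> zw = indicator B (fst zw) * \<phi> zw" for zw
  have \<Phi>_meas: "\<Phi> \<in> borel_measurable (S \<Otimes>\<^sub>M R)" unfolding \<Phi>_def using B \<phi> by measurable
  have ZW: "(\<lambda>\<omega>. (Z \<omega>, W \<omega>)) \<in> M \<rightarrow>\<^sub>M S \<Otimes>\<^sub>M R" and Z\<sigma>W: "(\<lambda>\<omega>. (Z \<omega>, \<sigma> (W \<omega>))) \<in> M \<rightarrow>\<^sub>M S \<Otimes>\<^sub>M R"
    using Z W \<sigma> by measurable
  have set_int: "(\<integral>\<omega>\<in>A. f (Z \<omega>, W \<omega>) \<partial>M) = (\<integral>\<omega>. indicator B (Z \<omega>) * f (Z \<omega>, W \<omega>) \<partial>M)" for f :: "'s \<times> 'r \<Rightarrow> real"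
    unfolding set_lebesgue_integral_def A by (intro Bochner_Integration.integral_cong) (auto simp: indicator_def)
  have int_indicator: "integrable M (\<lambda>\<omega>. indicator B (Z \<omega>) * f (Z \<omega>, W \<omega>))"
    if "integrable M (\<lambda>\<omega>. f (Z \<omega>, W \<omega>))" for f :: "'s \<times> 'r \<Rightarrow> real"
  proof -
    have "integrable M (\<lambda>\<omega>. indicator (Z -` B \<inter> space M) \<omega> * f (Z \<omega>, W \<omega>))"
      using integrable_mult_indicator[OF measurable_sets[OF Z B] that] by simp
    moreover have "integrable M (\<lambda>\<omega>. indicator (Z -` B \<inter> space M) \<omega> * f (Z \<omega>, W \<omega>))
        = integrable M (\<lambda>\<omega>. indicator B (Z \<omega>) * f (Z \<omega>, W \<omega>))"
      by (intro Bochner_Integration.integrable_cong) (auto simp: indicator_def)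
    ultimately show ?thesis by simp
  qed
  have int_\<Phi>\<sigma>: "integrable M (\<lambda>\<omega>. \<Phi> (Z \<omega>, \<sigma> (W \<omega>)))"
    using int_indicator[OF int_\<phi>] integrable_distr_eq[OF ZW \<Phi>_meas] integrable_distr_eq[OF Z\<sigma>W \<Phi>_meas]
    by (simp add: exch \<Phi>_def)
  have "(\<integral>\<omega>\<in>A. \<phi> (Z \<omega>, W \<omega>) \<partial>M) = (\<integral>\<omega>. \<Phi> (Z \<omega>, W \<omega>) \<partial>M)"
    unfolding set_int \<Phi>_def by simp
  also have "\<dots> = (\<integral>\<omega>. \<Phi> (Z \<omega>, \<sigma> (W \<omega>)) \<partial>M)"
    using integral_distr[OF ZW \<Phi>_meas] integral_distr[OF Z\<sigma>W \<Phi>_meas] by (simp add: exch)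
  also have "\<dots> \<le> (\<integral>\<omega>. indicator B (Z \<omega>) * \<psi> (Z \<omega>, W \<omega>) \<partial>M)"
    using le by (intro integral_mono[OF int_\<Phi>\<sigma> int_indicator[OF int_\<psi>]]) (auto simp: \<Phi>_def indicator_def)
  also have "\<dots> = (\<integral>\<omega>\<in>A. \<psi> (Z \<omega>, W \<omega>) \<partial>M)"
    unfolding set_int ..
  finally show "(\<integral>\<omega>\<in>A. \<phi> (Z \<omega>, W \<omega>) \<partial>M) \<le> (\<integral>\<omega>\<in>A. \<psi> (Z \<omega>, W \<omega>) \<partial>M)" .
qed

lemma space_sigma_preimages:
  "space (sigma \<Omega> (\<Union>a\<in>A. \<Union>k\<in>B. {f a k -` U \<inter> \<Omega> | U. U \<in> sets N})) = \<Omega>"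
  by (rule space_measure_of) auto

lemma measurable_sigma_preimages:
  assumes "a \<in> A" "k \<in> B" "f a k \<in> \<Omega> \<rightarrow> space N"
  shows "f a k \<in> sigma \<Omega> (\<Union>a\<in>A. \<Union>k\<in>B. {f a k -` U \<inter> \<Omega> | U. U \<in> sets N}) \<rightarrow>\<^sub>M N"
proof (rule measurableI)
  let ?G = "\<Union>a\<in>A. \<Union>k\<in>B. {f a k -` U \<inter> \<Omega> | U. U \<in> sets N}"
  have sets: "sets (sigma \<Omega> ?G) = sigma_sets \<Omega> ?G" by (rule sets_measure_of) auto
  show "f a k x \<in> space N" if "x \<in> space (sigma \<Omega> ?G)" for x
    using that assms(3) by (auto simp: space_sigma_preimages)
  show "f a k -` U \<inter> space (sigma \<Omega> ?G) \<in> sets (sigma \<Omega> ?G)" if "U \<in> sets N" for U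
    unfolding space_sigma_preimages sets using that assms(1,2) by (intro sigma_sets.Basic) blast
qed

lemma sets_sigma_preimages_vimage:
  assumes f: "\<And>a k. a \<in> A \<Longrightarrow> k \<in> B \<Longrightarrow> f a k \<in> \<Omega> \<rightarrow> space N"
    and E: "E \<in> sets (sigma \<Omega> (\<Union>a\<in>A. \<Union>k\<in>B. {f a k -` U \<inter> \<Omega> | U. U \<in> sets N}))"
  shows "\<exists>U\<in>sets (\<Pi>\<^sub>M ak\<in>A \<times> B. N). E = (\<lambda>\<omega>. \<lambda>ak\<in>A \<times> B. f (fst ak) (snd ak) \<omega>) -` U \<inter> \<Omega>"
proof -
  let ?G = "\<Union>a\<in>A. \<Union>k\<in>B. {f a k -` U \<inter> \<Omega> | U. U \<in> sets N}"
  let ?P = "\<Pi>\<^sub>M ak\<in>A \<times> B. N"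
  let ?Z = "\<lambda>\<omega>. \<lambda>ak\<in>A \<times> B. f (fst ak) (snd ak) \<omega>"
  have Z: "?Z \<in> \<Omega> \<rightarrow> space ?P"
    unfolding space_PiM restrict_PiE_iff using f by (auto simp: Pi_iff)
  have "?G \<subseteq> sets (vimage_algebra \<Omega> ?Z ?P)"
  proof
    fix G assume "G \<in> ?G"
    then obtain a k U where ak: "a \<in> A" "k \<in> B" and U: "U \<in> sets N" and G: "G = f a k -` U \<inter> \<Omega>"
      by blast
    have "(\<lambda>z. z (a, k)) -` U \<inter> space ?P \<in> sets ?P"
      using measurable_sets[OF measurable_component_singleton[of "(a, k)" "A \<times> B" "\<lambda>_. N"] U] ak
      by simp
    moreover have "G = ?Z -` ((\<lambda>z. z (a, k)) -` U \<inter> space ?P) \<inter> \<Omega>"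
      using Z ak by (auto simp: G)
    ultimately show "G \<in> sets (vimage_algebra \<Omega> ?Z ?P)"
      unfolding sets_vimage_algebra2[OF Z] by blast
  qed
  then have "sigma_sets \<Omega> ?G \<subseteq> sets (vimage_algebra \<Omega> ?Z ?P)"
    using sigma_sets_le_sets_iff[of "vimage_algebra \<Omega> ?Z ?P" ?G] by simp
  moreover have "sets (sigma \<Omega> ?G) = sigma_sets \<Omega> ?G" by (rule sets_measure_of) auto
  ultimately show ?thesis using E unfolding sets_vimage_algebra2[OF Z] by blast
qed

lemma measurable_comp_PiM_UNIV:
  "(\<lambda>h. h \<circ> g) \<in> (\<Pi>\<^sub>M k\<in>UNIV. N) \<rightarrow>\<^sub>M (\<Pi>\<^sub>M k\<in>UNIV. N)"
proof -
  have "(\<lambda>h. \<lambda>k\<in>UNIV. h (g k)) \<in> (\<Pi>\<^sub>M k\<in>UNIV. N) \<rightarrow>\<^sub>M (\<Pi>\<^sub>M k\<in>UNIV. N)"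
    by (intro measurable_restrict measurable_component_singleton) auto
  then show ?thesis by (simp add: comp_def restrict_UNIV)
qed

(* SINR of station a + 1 of one technology as a function of its distance sequence r and fading
   sequence h, both indexed from 0. *)
definition sinr_of :: "real \<Rightarrow> real \<Rightarrow> (real \<Rightarrow> real) \<Rightarrow> nat \<Rightarrow> (nat \<Rightarrow> real) \<Rightarrow> (nat \<Rightarrow> real) \<Rightarrow> ennreal" where
  "sinr_of Q N0 l a r h = ennreal (Q * h a * l (r a)) /
     (ennreal N0 + (\<Sum>k. if k = a then 0 else ennreal (Q * h k * l (r k))))"

lemma measurable_sinr_of [measurable]:
  assumes [measurable]: "l \<in> borel_measurable borel"
    and [measurable]: "r \<in> M \<rightarrow>\<^sub>M (\<Pi>\<^sub>M k\<in>UNIV. borel)" "h \<in> M \<rightarrow>\<^sub>M (\<Pi>\<^sub>M k\<in>UNIV. borel)"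
  shows "(\<lambda>x. sinr_of Q N0 l a (r x) (h x)) \<in> borel_measurable M"
  unfolding sinr_of_def by measurable

lemma sinr_of_transpose_le:
  assumes h: "\<And>k. 0 \<le> h k" and Q: "0 < Q" and l: "l (r a) \<le> l (r 0)"
  shows "sinr_of Q N0 l a r (h \<circ> Transposition.transpose 0 a) \<le> sinr_of Q N0 l 0 r h"
proof (cases "a = 0")
  case True
  then show ?thesis by simp
next
  case False
  define c where "c k = ennreal (Q * h k * l (r k))" for k
  define R where "R = (\<Sum>k. if k = 0 \<or> k = a then 0 else c k)"
  have "(\<Sum>k. if k = a then 0 else ennreal (Q * (h \<circ> Transposition.transpose 0 a) k * l (r k)))
      = ennreal (Q * h a * l (r 0)) + R"
  proof (subst suminf_ennreal_pick[where b = 0])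
    have "(\<lambda>k. if k = 0 then 0 else if k = a then 0
            else ennreal (Q * (h \<circ> Transposition.transpose 0 a) k * l (r k)))
        = (\<lambda>k. if k = 0 \<or> k = a then 0 else c k)"
      by (auto simp: c_def fun_eq_iff)
    then show "(if 0 = a then 0 else ennreal (Q * (h \<circ> Transposition.transpose 0 a) 0 * l (r 0))) +
        (\<Sum>k. if k = 0 then 0 else if k = a then 0
          else ennreal (Q * (h \<circ> Transposition.transpose 0 a) k * l (r k)))
        = ennreal (Q * h a * l (r 0)) + R"
      using False by (simp add: R_def)
  qed
  moreover have "(\<Sum>k. if k = 0 then 0 else c k) = c a + R"
  proof (subst suminf_ennreal_pick[where b = a])
    have "(\<lambda>k. if k = a then 0 else if k = 0 then 0 else c k) = (\<lambda>k. if k = 0 \<or> k = a then 0 else c k)"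
      by (auto simp: fun_eq_iff)
    then show "(if a = 0 then 0 else c a) + (\<Sum>k. if k = a then 0 else if k = 0 then 0 else c k) = c a + R"
      using False by (simp add: R_def)
  qed
  moreover have "c a \<le> ennreal (Q * h a * l (r 0))"
    unfolding c_def using h[of a] Q l by (intro ennreal_leI mult_left_mono) auto
  moreover have "ennreal (Q * h 0 * l (r a)) \<le> ennreal (Q * h 0 * l (r 0))"
    using h[of 0] Q l by (intro ennreal_leI mult_left_mono) auto
  ultimately show ?thesis
    unfolding sinr_of_def c_def[symmetric] using False
    by (intro divide_mono_ennreal) (simp_all add: add.assoc add_mono)
qed

(* The points of all technologies as a single random element; it generates point_sigma M T X. *)
definition point_config :: "nat \<Rightarrow> (nat \<Rightarrow> nat \<Rightarrow> 'a \<Rightarrow> real^2) \<Rightarrow> 'a \<Rightarrow> nat \<times> nat \<Rightarrow> real^2" where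
  "point_config T X \<omega> = (\<lambda>ak\<in>{..<T} \<times> {1..}. X (fst ak) (snd ak) \<omega>)"

definition fading_seq :: "(nat \<Rightarrow> nat \<Rightarrow> 'a \<Rightarrow> real) \<Rightarrow> nat \<Rightarrow> 'a \<Rightarrow> nat \<Rightarrow> real" where
  "fading_seq H i \<omega> k = H i (Suc k) \<omega>"

definition distances :: "nat \<Rightarrow> (nat \<times> nat \<Rightarrow> real^2) \<Rightarrow> nat \<Rightarrow> real" where
  "distances i z k = norm (z (i, Suc k))"

lemma point_config_apply:
  "a < T \<Longrightarrow> 1 \<le> k \<Longrightarrow> point_config T X \<omega> (a, k) = X a k \<omega>"
  unfolding point_config_def by simp

lemma sinr_Suc_eq_sinr_of:
  assumes "i < T"
  shows "sinr P N0 l H X i (Suc a) \<omega>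
    = sinr_of (P i) (N0 i) (l i) a (distances i (point_config T X \<omega>)) (fading_seq H i \<omega>)"
proof -
  have "distances i (point_config T X \<omega>) k = norm (X i (Suc k) \<omega>)" for k
    using assms by (simp add: distances_def point_config_apply)
  then show ?thesis unfolding sinr_def sinr_of_def fading_seq_def by (simp only: nat.inject)
qed

lemma measurable_point_config:
  assumes "\<And>a k. a < T \<Longrightarrow> 1 \<le> k \<Longrightarrow> X a k \<in> borel_measurable M"
  shows "point_config T X \<in> M \<rightarrow>\<^sub>M (\<Pi>\<^sub>M ak\<in>{..<T} \<times> {1..}. borel)"
  unfolding point_config_def using assms by (intro measurable_restrict) auto

lemma measurable_fading_seq_reindex:
  assumes "\<And>k. H i (Suc (g k)) \<in> borel_measurable M"
  shows "(\<lambda>\<omega>. fading_seq H i \<omega> \<circ> g) \<in> M \<rightarrow>\<^sub>M (\<Pi>\<^sub>M k\<in>UNIV. borel)"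
proof -
  have "(\<lambda>\<omega>. \<lambda>k\<in>UNIV. H i (Suc (g k)) \<omega>) \<in> M \<rightarrow>\<^sub>M (\<Pi>\<^sub>M k\<in>UNIV. borel)"
    using assms by (intro measurable_restrict) auto
  then show ?thesis by (simp add: fading_seq_def comp_def restrict_UNIV)
qed

lemma measurable_distances:
  assumes "i < T"
  shows "distances i \<in> (\<Pi>\<^sub>M ak\<in>{..<T} \<times> {1..}. borel) \<rightarrow>\<^sub>M (\<Pi>\<^sub>M k\<in>UNIV. borel)"
proof -
  have "(\<lambda>z. norm (z (i, Suc k))) \<in> borel_measurable (\<Pi>\<^sub>M ak\<in>{..<T} \<times> {1..}. borel)" for k
    using measurable_component_singleton[of "(i, Suc k)" "{..<T} \<times> {1..}" "\<lambda>_. borel"] assms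
    by (intro measurable_compose[OF _ borel_measurable_norm]) auto
  then have "(\<lambda>z. \<lambda>k\<in>UNIV. norm (z (i, Suc k))) \<in> (\<Pi>\<^sub>M ak\<in>{..<T} \<times> {1..}. borel) \<rightarrow>\<^sub>M (\<Pi>\<^sub>M k\<in>UNIV. borel)"
    by (intro measurable_restrict)
  then show ?thesis by (simp add: distances_def[abs_def] restrict_UNIV)
qed

lemma distr_point_config_fading_seq_reindex:
  fixes X :: "nat \<Rightarrow> nat \<Rightarrow> 'a \<Rightarrow> real^2" and H :: "nat \<Rightarrow> nat \<Rightarrow> 'a \<Rightarrow> real"
  assumes M: "prob_space M"
    and X: "\<And>a k. a < T \<Longrightarrow> 1 \<le> k \<Longrightarrow> X a k \<in> borel_measurable M"
    and H_indep: "prob_space.indep_vars M (\<lambda>_. borel) (\<lambda>(i, j). H i j) {(i, j). i < T \<and> 1 \<le> j}"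
    and H_ident: "\<forall>a\<in>{(i, j). i < T \<and> 1 \<le> j}. \<forall>b\<in>{(i, j). i < T \<and> 1 \<le> j}.
                    distr M borel (case_prod H a) = distr M borel (case_prod H b)"
    and H_ppp_indep: "prob_space.indep_set M (sets (point_sigma M T X)) (sets (fading_sigma M T H))"
    and "i < T" and "inj g"
  shows "distr M ((\<Pi>\<^sub>M ak\<in>{..<T} \<times> {1..}. borel) \<Otimes>\<^sub>M (\<Pi>\<^sub>M k\<in>UNIV. borel))
           (\<lambda>\<omega>. (point_config T X \<omega>, fading_seq H i \<omega> \<circ> g))
       = distr M ((\<Pi>\<^sub>M ak\<in>{..<T} \<times> {1..}. borel) \<Otimes>\<^sub>M (\<Pi>\<^sub>M k\<in>UNIV. borel))
           (\<lambda>\<omega>. (point_config T X \<omega>, fading_seq H i \<omega>))"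
proof -
  interpret prob_space M by fact
  let ?PJ = "\<Pi>\<^sub>M ak\<in>{..<T} \<times> {1..}. (borel :: (real^2) measure)"
  let ?PW = "\<Pi>\<^sub>M k\<in>(UNIV :: nat set). (borel :: real measure)"
  have H: "H a k \<in> borel_measurable M" if "a < T" "1 \<le> k" for a k
    using H_indep that unfolding indep_vars_def2 by auto
  have Z: "point_config T X \<in> point_sigma M T X \<rightarrow>\<^sub>M ?PJ"
    unfolding point_config_def point_sigma_def
    by (intro measurable_restrict measurable_sigma_preimages) auto
  have W: "(\<lambda>\<omega>. fading_seq H i \<omega> \<circ> g') \<in> fading_sigma M T H \<rightarrow>\<^sub>M ?PW" for g'
    unfolding fading_sigma_def using \<open>i < T\<close>
    by (intro measurable_fading_seq_reindex measurable_sigma_preimages) auto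
  have pair_distr: "distr M (?PJ \<Otimes>\<^sub>M ?PW) (\<lambda>\<omega>. (point_config T X \<omega>, fading_seq H i \<omega> \<circ> g'))
      = distr M ?PJ (point_config T X) \<Otimes>\<^sub>M distr M ?PW (\<lambda>\<omega>. fading_seq H i \<omega> \<circ> g')" for g'
    using \<open>i < T\<close>
    by (intro distr_pair_eq_pair_measure_if_indep_set[OF M H_ppp_indep] Z W
        measurable_point_config measurable_fading_seq_reindex X H)
      (auto simp: point_sigma_def fading_sigma_def space_sigma_preimages)
  have iid: "distr M ?PW (\<lambda>\<omega>. fading_seq H i \<omega> \<circ> g') = (\<Pi>\<^sub>M k\<in>UNIV. distr M borel (H i 1))"
    if "inj g'" for g'
  proof -
    have "distr M ?PW (\<lambda>\<omega>. \<lambda>k\<in>UNIV. (\<lambda>(i, j). H i j) ((\<lambda>k. (i, Suc (g' k))) k) \<omega>)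
        = (\<Pi>\<^sub>M k\<in>UNIV. distr M borel (H i 1))"
      using \<open>i < T\<close> \<open>inj g'\<close> H_ident
      by (intro distr_reindex_iid[OF M H_indep]) (auto simp: inj_on_def)
    then show ?thesis by (simp add: fading_seq_def comp_def restrict_UNIV)
  qed
  show ?thesis
    using pair_distr[of g] pair_distr[of id] iid[OF \<open>inj g\<close>] iid[of id] by simp
qed

lemma real_cond_exp_sinr_le_nearest:
  fixes X :: "nat \<Rightarrow> nat \<Rightarrow> 'a \<Rightarrow> real^2" and H :: "nat \<Rightarrow> nat \<Rightarrow> 'a \<Rightarrow> real"
  assumes M: "prob_space M" and F_sub: "subalgebra M F"
    and F_no_fading: "sets F \<subseteq> sets (point_sigma M T X)"
    and X_meas: "\<And>a k. a < T \<Longrightarrow> 1 \<le> k \<Longrightarrow> X a k \<in> borel_measurable M"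
    and H_indep: "prob_space.indep_vars M (\<lambda>_. borel) (\<lambda>(i, j). H i j) {(i, j). i < T \<and> 1 \<le> j}"
    and H_ident: "\<forall>a\<in>{(i, j). i < T \<and> 1 \<le> j}. \<forall>b\<in>{(i, j). i < T \<and> 1 \<le> j}.
                    distr M borel (case_prod H a) = distr M borel (case_prod H b)"
    and H_ppp_indep: "prob_space.indep_set M (sets (point_sigma M T X)) (sets (fading_sigma M T H))"
    and i: "i < T" and P: "0 < P i" and l_mono: "antimono (l i)" and p_mono: "mono (p i)"
    and l_sorted: "\<And>\<omega> k. \<omega> \<in> space M \<Longrightarrow> 1 \<le> k \<Longrightarrow> l i (norm (X i (Suc k) \<omega>)) \<le> l i (norm (X i k \<omega>))"
    and H_nonneg: "\<And>j \<omega>. 1 \<le> j \<Longrightarrow> \<omega> \<in> space M \<Longrightarrow> 0 \<le> H i j \<omega>"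
    and integrable: "\<And>j. 1 \<le> j \<Longrightarrow> integrable M (\<lambda>\<omega>. p i (sinr P N0 l H X i j \<omega>))"
  shows "AE \<omega> in M. real_cond_exp M F (\<lambda>\<omega>. p i (sinr P N0 l H X i (Suc a) \<omega>)) \<omega>
    \<le> real_cond_exp M F (\<lambda>\<omega>. p i (sinr P N0 l H X i 1 \<omega>)) \<omega>"
proof -
  let ?PJ = "\<Pi>\<^sub>M ak\<in>{..<T} \<times> {1..}. (borel :: (real^2) measure)"
  let ?PW = "\<Pi>\<^sub>M k\<in>(UNIV :: nat set). (borel :: real measure)"
  let ?Z = "point_config T X" and ?W = "fading_seq H i"
  define \<phi> where "\<phi> b = (\<lambda>(z, h). p i (sinr_of (P i) (N0 i) (l i) b (distances i z) h))" for b
  have H_meas: "\<And>k. H i (Suc k) \<in> borel_measurable M"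
    using H_indep i unfolding prob_space.indep_vars_def2[OF M] by auto
  have [measurable]: "l i \<in> borel_measurable borel" "p i \<in> borel_measurable borel"
    using l_mono p_mono by (auto intro: borel_measurable_antimono borel_measurable_mono_complete_linorder)
  have \<phi>_meas: "\<phi> b \<in> borel_measurable (?PJ \<Otimes>\<^sub>M ?PW)" for b
    unfolding \<phi>_def using measurable_distances[OF i] by measurable
  have sinr_eq: "(\<lambda>\<omega>. p i (sinr P N0 l H X i (Suc b) \<omega>)) = (\<lambda>\<omega>. \<phi> b (?Z \<omega>, ?W \<omega>))" for b
    by (simp add: \<phi>_def sinr_Suc_eq_sinr_of[OF i])
  have "AE \<omega> in M. real_cond_exp M F (\<lambda>\<omega>. \<phi> a (?Z \<omega>, ?W \<omega>)) \<omega>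
      \<le> real_cond_exp M F (\<lambda>\<omega>. \<phi> 0 (?Z \<omega>, ?W \<omega>)) \<omega>"
  proof (rule real_cond_exp_le_by_exchange[OF M F_sub _ _ _ _ _ \<phi>_meas])
    show "?Z \<in> M \<rightarrow>\<^sub>M ?PJ" by (rule measurable_point_config[OF X_meas])
    show "?W \<in> M \<rightarrow>\<^sub>M ?PW" using measurable_fading_seq_reindex[of H i id] H_meas by simp
    show "(\<lambda>h. h \<circ> Transposition.transpose 0 a) \<in> ?PW \<rightarrow>\<^sub>M ?PW"
      by (rule measurable_comp_PiM_UNIV)
    show "\<exists>B\<in>sets ?PJ. A = ?Z -` B \<inter> space M" if "A \<in> sets F" for A
      using that F_no_fading unfolding point_sigma_def point_config_def
      by (intro sets_sigma_preimages_vimage) auto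
    show "distr M (?PJ \<Otimes>\<^sub>M ?PW) (\<lambda>\<omega>. (?Z \<omega>, ?W \<omega> \<circ> Transposition.transpose 0 a))
        = distr M (?PJ \<Otimes>\<^sub>M ?PW) (\<lambda>\<omega>. (?Z \<omega>, ?W \<omega>))"
      by (rule distr_point_config_fading_seq_reindex[OF M X_meas H_indep H_ident H_ppp_indep i])
        (auto intro: inj_transpose)
    show "integrable M (\<lambda>\<omega>. \<phi> a (?Z \<omega>, ?W \<omega>))"
      using integrable[of "Suc a"] by (simp add: sinr_eq)
    show "integrable M (\<lambda>\<omega>. \<phi> 0 (?Z \<omega>, ?W \<omega>))"
      using integrable[of "Suc 0"] by (simp add: sinr_eq)
    show "\<phi> a (?Z \<omega>, ?W \<omega> \<circ> Transposition.transpose 0 a) \<le> \<phi> 0 (?Z \<omega>, ?W \<omega>)"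
      if "\<omega> \<in> space M" for \<omega>
    proof -
      have "l i (norm (X i (Suc a) \<omega>)) \<le> l i (norm (X i 1 \<omega>))"
        using lift_Suc_antimono_le[of "\<lambda>k. l i (norm (X i (Suc k) \<omega>))" 0 a] l_sorted[OF that] by simp
      then show ?thesis
        using sinr_of_transpose_le[of "?W \<omega>" "P i" "l i" "distances i (?Z \<omega>)" a] p_mono H_nonneg P i that
        by (auto simp: \<phi>_def mono_def fading_seq_def distances_def point_config_apply)
    qed
  qed
  then show ?thesis using sinr_eq[of a] sinr_eq[of 0, folded One_nat_def] by simp
qed

theorem lemma2:
  fixes M :: "'a measure" and F :: "'a measure" and T :: nat
    and lam P N0 :: "nat \<Rightarrow> real" and l :: "nat \<Rightarrow> real \<Rightarrow> real"
    and X :: "nat \<Rightarrow> nat \<Rightarrow> 'a \<Rightarrow> real^2" and H :: "nat \<Rightarrow> nat \<Rightarrow> 'a \<Rightarrow> real"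
    and p :: "nat \<Rightarrow> ennreal \<Rightarrow> real"
  assumes M: "prob_space M" and T: "T \<ge> 1"
    and ppp: "\<forall>i<T. hom_PPP M (lam i) (X i)"
    and ppp_indep: "prob_space.indep_vars M (\<lambda>_. Pi\<^sub>M UNIV (\<lambda>_. borel)) (\<lambda>i \<omega>. \<lambda>k. X i (Suc k) \<omega>) {..<T}"
    and sorted: "\<forall>i<T. \<forall>\<omega>\<in>space M. \<forall>k\<ge>1. norm (X i k \<omega>) < norm (X i (Suc k) \<omega>)"
    and P: "\<forall>i<T. P i > 0" and N0: "\<forall>i<T. N0 i \<ge> 0"
    and l_mono: "\<forall>i<T. antimono (l i)" and l_nonneg: "\<forall>i<T. \<forall>x. l i x \<ge> 0"
    and S_strict: "\<forall>i<T. \<forall>\<omega>\<in>space M. \<forall>k\<ge>1.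
                      P i * l i (norm (X i (Suc k) \<omega>)) < P i * l i (norm (X i k \<omega>))"
    and H_nonneg: "\<forall>i<T. \<forall>j\<ge>1. \<forall>\<omega>\<in>space M. H i j \<omega> \<ge> 0"
    and H_indep: "prob_space.indep_vars M (\<lambda>_. borel) (\<lambda>(i, j). H i j) {(i, j). i < T \<and> 1 \<le> j}"
    and H_ident: "\<forall>a\<in>{(i, j). i < T \<and> 1 \<le> j}. \<forall>b\<in>{(i, j). i < T \<and> 1 \<le> j}.
                    distr M borel (case_prod H a) = distr M borel (case_prod H b)"
    and H_ppp_indep: "prob_space.indep_set M (sets (point_sigma M T X)) (sets (fading_sigma M T H))"
    and p_mono: "\<forall>i<T. mono (p i)"
    and integrable: "\<forall>i<T. \<forall>j\<ge>1. integrable M (\<lambda>\<omega>. p i (sinr P N0 l H X i j \<omega>))"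
    and F_sub: "subalgebra M F"
    and F_no_fading: "sets F \<subseteq> sets (point_sigma M T X)"
  shows "\<forall>i<T. AE \<omega> in M. \<forall>j\<ge>1.
           real_cond_exp M F (\<lambda>\<omega>. p i (sinr P N0 l H X i j \<omega>)) \<omega>
             \<le> real_cond_exp M F (\<lambda>\<omega>. p i (sinr P N0 l H X i 1 \<omega>)) \<omega>"
proof (intro allI impI)
  fix i assume i: "i < T"
  have X_meas: "\<And>a k. a < T \<Longrightarrow> 1 \<le> k \<Longrightarrow> X a k \<in> borel_measurable M"
    using ppp by (auto simp: hom_PPP_def)
  have l_sorted: "l i (norm (X i (Suc k) \<omega>)) \<le> l i (norm (X i k \<omega>))"
    if "\<omega> \<in> space M" "1 \<le> k" for \<omega> k
    using S_strict P i that by (auto intro!: less_imp_le simp: mult_less_cancel_left_pos)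
  have "AE \<omega> in M. 1 \<le> j \<longrightarrow> real_cond_exp M F (\<lambda>\<omega>. p i (sinr P N0 l H X i j \<omega>)) \<omega>
      \<le> real_cond_exp M F (\<lambda>\<omega>. p i (sinr P N0 l H X i 1 \<omega>)) \<omega>" for j
  proof (cases j)
    case (Suc a)
    have "AE \<omega> in M. real_cond_exp M F (\<lambda>\<omega>. p i (sinr P N0 l H X i (Suc a) \<omega>)) \<omega>
        \<le> real_cond_exp M F (\<lambda>\<omega>. p i (sinr P N0 l H X i 1 \<omega>)) \<omega>"
      by (rule real_cond_exp_sinr_le_nearest[OF M F_sub F_no_fading X_meas H_indep H_ident H_ppp_indep i])
        (use P l_mono p_mono l_sorted H_nonneg integrable i in auto)
    then show ?thesis using Suc by simp
  qed simp
  then show "AE \<omega> in M. \<forall>j\<ge>1. real_cond_exp M F (\<lambda>\<omega>. p i (sinr P N0 l H X i j \<omega>)) \<omega>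
      \<le> real_cond_exp M F (\<lambda>\<omega>. p i (sinr P N0 l H X i 1 \<omega>)) \<omega>"
    unfolding AE_all_countable by blast
qed

end
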